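(* Let $X$ be a continuum (a connected compact metric space). Then for every real $t \ge \operatorname{diam} X$ with $t>0$ and every positive integer $p$, $$d_{GH}(t\Delta_p, X) = d_{GH}\bigl(\mathcal{H}(t\Delta_p), \mathcal{H}(X)\bigr).$$
   Context: A simplex $t\Delta_p$ is the metric space with $p$ points, any two distinct ones at distance $t$. For a compact metric space $X$, $\mathcal{H}(X)$ is the set of all nonempty closed subsets of $X$ with the Hausdorff distance $|AB| = \max\{\sup_{a\in A}\inf_{b\in B}|ab|, \sup_{b\in B}\inf_{a\in A}|ab|\}$. $d_{GH}$ is the Gromov–Hausdorff distance (the infimum of $r$ such that there is a metric space $Z$ containing isometric copies $X',Y'$ of the two spaces with Hausdorff distance $|X'Y'|_Z\le r$). *)

theory Defs
  imports "HOL-Analysis.Analysis"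
begin

definition diam_of :: "'a set \<Rightarrow> ('a \<Rightarrow> 'a \<Rightarrow> real) \<Rightarrow> real" where
  "diam_of X d = Sup {d x y | x y. x \<in> X \<and> y \<in> X}"

definition continuum :: "'a set \<Rightarrow> ('a \<Rightarrow> 'a \<Rightarrow> real) \<Rightarrow> bool" where
  "continuum X d \<longleftrightarrow> Metric_space X d \<and> X \<noteq> {} \<and>
     compact_space (Metric_space.mtopology X d) \<and>
     connected_space (Metric_space.mtopology X d)"

definition hausd :: "('a \<Rightarrow> 'a \<Rightarrow> real) \<Rightarrow> 'a set \<Rightarrow> 'a set \<Rightarrow> real" where
  "hausd d A B = max (SUP a\<in>A. INF b\<in>B. d a b) (SUP b\<in>B. INF a\<in>A. d a b)"

definition simplex_carrier :: "nat \<Rightarrow> nat set" where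
  "simplex_carrier p = {0..<p}"

definition simplex_dist :: "real \<Rightarrow> nat \<Rightarrow> nat \<Rightarrow> real" where
  "simplex_dist t i j = (if i = j then 0 else t)"

definition hyp_carrier :: "'a set \<Rightarrow> ('a \<Rightarrow> 'a \<Rightarrow> real) \<Rightarrow> 'a set set" where
  "hyp_carrier X d = {A. A \<subseteq> X \<and> A \<noteq> {} \<and> closedin (Metric_space.mtopology X d) A}"

definition hyp_dist :: "('a \<Rightarrow> 'a \<Rightarrow> real) \<Rightarrow> 'a set \<Rightarrow> 'a set \<Rightarrow> real" where
  "hyp_dist d = hausd d"

definition isom_embed :: "'a set \<Rightarrow> ('a \<Rightarrow> 'a \<Rightarrow> real) \<Rightarrow> 'z set \<Rightarrow> ('z \<Rightarrow> 'z \<Rightarrow> real)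
    \<Rightarrow> ('a \<Rightarrow> 'z) \<Rightarrow> bool" where
  "isom_embed X dX Z dZ f \<longleftrightarrow> f ` X \<subseteq> Z \<and> (\<forall>x\<in>X. \<forall>y\<in>X. dZ (f x) (f y) = dX x y)"

text \<open>The
ambient space Z is taken with points in the type 'a + 'b, which is no loss of
generality (one may always restrict Z to the union of the two copies, which
injects into the disjoint union).\<close>
definition GH_dist :: "'a set \<Rightarrow> ('a \<Rightarrow> 'a \<Rightarrow> real) \<Rightarrow> 'b set \<Rightarrow> ('b \<Rightarrow> 'b \<Rightarrow> real) \<Rightarrow> real" where
  "GH_dist X dX Y dY = Inf {r. \<exists>(Z :: ('a + 'b) set) dZ f g.
      Metric_space Z dZ \<and> isom_embed X dX Z dZ f \<and> isom_embed Y dY Z dZ g \<and>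
      hausd dZ (f ` X) (g ` Y) \<le> r}"

end

theory Submission
  imports Defs
begin

text \<open>Both sides equal \<open>diam X / 2\<close> when \<open>p = 1\<close> and \<open>t / 2\<close> when \<open>p \<ge> 2\<close>.
Indeed \<open>\<H>(t\<Delta>\<^sub>p)\<close> is again a simplex with pairwise distances \<open>t\<close> (on \<open>2\<^sup>p - 1\<close> points), and
\<open>\<H>(X)\<close> shares with \<open>X\<close> the two properties that determine the Gromov--Hausdorff distance to such a
simplex: its diameter is \<open>diam X \<le> t\<close>, and it is well-chained (any two points are joined by
\<open>\<epsilon>\<close>-chains for every \<open>\<epsilon> > 0\<close>), since every closed set is \<open>\<epsilon>\<close>-close to a finite set and finite
sets can be moved one point at a time along \<open>\<epsilon>\<close>-chains of the connected space \<open>X\<close>.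
For a single point the distance to \<open>Y\<close> is \<open>diam Y / 2\<close>.  For at least two points, gluing at
distance \<open>t / 2\<close> realises \<open>t / 2\<close>; conversely, in a realisation at distance \<open>r < t / 2\<close> the
points of \<open>Y\<close> near a fixed vertex form a set closed under \<open>(t - 2r)\<close>-steps, hence all of \<open>Y\<close>, which
leaves no point of \<open>Y\<close> near any other vertex.\<close>

text \<open>The locale Metric_space requires symmetry and nonnegativity of the distance everywhere, but
the Hausdorff distance has them only on nonempty bounded sets.  Restricting a distance to its
carrier repairs this without changing GH_dist or diam_of.\<close>

definition restrict_dist :: "'a set \<Rightarrow> ('a \<Rightarrow> 'a \<Rightarrow> real) \<Rightarrow> 'a \<Rightarrow> 'a \<Rightarrow> real" where
  "restrict_dist M d x y = (if x \<in> M \<and> y \<in> M then d x y else 0)"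

lemma Metric_space_restrict_dist:
  assumes "\<And>x y. x \<in> M \<Longrightarrow> y \<in> M \<Longrightarrow> 0 \<le> d x y"
    and "\<And>x y. x \<in> M \<Longrightarrow> y \<in> M \<Longrightarrow> d x y = d y x"
    and "\<And>x y. x \<in> M \<Longrightarrow> y \<in> M \<Longrightarrow> d x y = 0 \<longleftrightarrow> x = y"
    and "\<And>x y z. x \<in> M \<Longrightarrow> y \<in> M \<Longrightarrow> z \<in> M \<Longrightarrow> d x z \<le> d x y + d y z"
  shows "Metric_space M (restrict_dist M d)"
  by unfold_locales (use assms in \<open>auto simp: restrict_dist_def\<close>)

lemma GH_dist_restrict_dist_left [simp]:
  "GH_dist X (restrict_dist X dX) Y dY = GH_dist X dX Y dY"
  by (simp add: GH_dist_def isom_embed_def restrict_dist_def)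

lemma GH_dist_restrict_dist_right [simp]:
  "GH_dist X dX Y (restrict_dist Y dY) = GH_dist X dX Y dY"
  by (simp add: GH_dist_def isom_embed_def restrict_dist_def)

lemma diam_of_restrict_dist [simp]: "diam_of X (restrict_dist X d) = diam_of X d"
  unfolding diam_of_def restrict_dist_def by (metis (full_types))

lemma diam_of_upper:
  assumes "\<And>x y. x \<in> X \<Longrightarrow> y \<in> X \<Longrightarrow> d x y \<le> K" "x \<in> X" "y \<in> X"
  shows "d x y \<le> diam_of X d"
  unfolding diam_of_def using assms by (intro cSup_upper) (auto intro!: bdd_aboveI[where M=K])

lemma diam_of_least:
  assumes "X \<noteq> {}" "\<And>x y. x \<in> X \<Longrightarrow> y \<in> X \<Longrightarrow> d x y \<le> c"
  shows "diam_of X d \<le> c"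
  unfolding diam_of_def using assms by (intro cSup_least) blast+

text \<open>Chain-connectedness at every scale, phrased via sets closed under \<open>e\<close>-steps.\<close>

definition well_chained :: "'a set \<Rightarrow> ('a \<Rightarrow> 'a \<Rightarrow> real) \<Rightarrow> bool" where
  "well_chained Y d \<longleftrightarrow> (\<forall>e>0. \<forall>U. (\<forall>x\<in>Y. \<forall>y\<in>Y. d x y < e \<longrightarrow> x \<in> U \<longrightarrow> y \<in> U)
      \<longrightarrow> (\<forall>x\<in>Y. \<forall>y\<in>Y. x \<in> U \<longrightarrow> y \<in> U))"

lemma well_chained_restrict_dist [simp]: "well_chained Y (restrict_dist Y d) = well_chained Y d"
  by (simp add: well_chained_def restrict_dist_def)

lemma well_chainedD:
  assumes "well_chained Y d" "e > 0"
    and "\<And>x y. x \<in> Y \<Longrightarrow> y \<in> Y \<Longrightarrow> d x y < e \<Longrightarrow> x \<in> U \<Longrightarrow> y \<in> U"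
    and "x \<in> Y" "y \<in> Y" "x \<in> U"
  shows "y \<in> U"
  using assms unfolding well_chained_def by blast

context Metric_space
begin

lemma hausd_commute: "hausd d A B = hausd d B A"
  unfolding hausd_def by (simp add: max.commute commute)

lemma hausd_le:
  assumes "A \<noteq> {}" "B \<noteq> {}"
    and "\<And>a. a \<in> A \<Longrightarrow> \<exists>b\<in>B. d a b \<le> r" and "\<And>b. b \<in> B \<Longrightarrow> \<exists>a\<in>A. d a b \<le> r"
  shows "hausd d A B \<le> r"
proof -
  have "(INF b\<in>B. d a b) \<le> r" if "a \<in> A" for a
    using assms(3)[OF that] by (meson bdd_belowI2 cINF_lower2 nonneg)
  moreover have "(INF a\<in>A. d a b) \<le> r" if "b \<in> B" for b
    using assms(4)[OF that] by (meson bdd_belowI2 cINF_lower2 nonneg)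
  ultimately show ?thesis
    unfolding hausd_def using assms(1,2) by (simp add: cSUP_least)
qed

lemma hausd_less_imp:
  assumes "mbounded (A \<union> B)" "B \<noteq> {}" "hausd d A B < r" "a \<in> A"
  shows "\<exists>b\<in>B. d a b < r"
proof -
  obtain K where K: "\<And>x y. x \<in> A \<union> B \<Longrightarrow> y \<in> A \<union> B \<Longrightarrow> d x y \<le> K"
    using assms(1) unfolding mbounded_alt by blast
  obtain b0 where "b0 \<in> B" using assms(2) by blast
  then have "bdd_above ((\<lambda>a. INF b\<in>B. d a b) ` A)"
    using K by (intro bdd_aboveI2 cINF_lower2) (auto intro: bdd_belowI2[where m=0])
  then have "(INF b\<in>B. d a b) \<le> hausd d A B"
    unfolding hausd_def using assms(4) by (meson cSUP_upper max.coboundedI1)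
  with assms(2,3) show ?thesis
    by (subst cINF_less_iff[symmetric]) (auto intro: bdd_belowI2[where m=0])
qed

lemma hausd_less_imp':
  assumes "mbounded (A \<union> B)" "A \<noteq> {}" "hausd d A B < r" "b \<in> B"
  shows "\<exists>a\<in>A. d a b < r"
  using hausd_less_imp[of B A r b] assms by (simp add: hausd_commute Un_commute commute)

lemma hausd_nonneg:
  assumes "mbounded (A \<union> B)" "A \<noteq> {}" "B \<noteq> {}"
  shows "0 \<le> hausd d A B"
  using hausd_less_imp[of A B 0] assms by (metis ex_in_conv not_le nonneg)

lemma hausd_triangle:
  assumes "mbounded (A \<union> B \<union> C)" "A \<noteq> {}" "B \<noteq> {}" "C \<noteq> {}"
  shows "hausd d A C \<le> hausd d A B + hausd d B C"
proof (rule field_le_epsilon)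
  fix e :: real assume "e > 0"
  have AB: "mbounded (A \<union> B)" and BC: "mbounded (B \<union> C)" and M: "A \<union> B \<union> C \<subseteq> M"
    using assms(1) mbounded_subset mbounded_subset_mspace by blast+
  let ?r = "hausd d A B + e/2" and ?s = "hausd d B C + e/2"
  show "hausd d A C \<le> hausd d A B + hausd d B C + e"
  proof (rule hausd_le[OF assms(2,4)])
    fix a assume "a \<in> A"
    then obtain b where b: "b \<in> B" "d a b < ?r" using hausd_less_imp[OF AB assms(3)] \<open>e > 0\<close> by force
    then obtain c where c: "c \<in> C" "d b c < ?s" using hausd_less_imp[OF BC assms(4)] \<open>e > 0\<close> by force
    have "d a c \<le> d a b + d b c" using M \<open>a \<in> A\<close> b c by (intro triangle) auto
    with b c show "\<exists>c\<in>C. d a c \<le> hausd d A B + hausd d B C + e" by force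
  next
    fix c assume "c \<in> C"
    then obtain b where b: "b \<in> B" "d b c < ?s" using hausd_less_imp'[OF BC assms(3)] \<open>e > 0\<close> by force
    then obtain a where a: "a \<in> A" "d a b < ?r" using hausd_less_imp'[OF AB assms(2)] \<open>e > 0\<close> by force
    have "d a c \<le> d a b + d b c" using M \<open>c \<in> C\<close> b a by (intro triangle) auto
    with a b show "\<exists>a\<in>A. d a c \<le> hausd d A B + hausd d B C + e" by force
  qed
qed

lemma hausd_self:
  assumes "mbounded A" "A \<noteq> {}"
  shows "hausd d A A = 0"
proof -
  have "\<exists>b\<in>A. d a b \<le> 0" "\<exists>b\<in>A. d b a \<le> 0" if "a \<in> A" for a
    using that mbounded_subset_mspace[OF assms(1)] by (auto intro!: bexI[of _ a])
  then have "hausd d A A \<le> 0" using assms(2) by (intro hausd_le)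
  with hausd_nonneg[of A A] assms show ?thesis by simp
qed

lemma hausd_eq_0_imp_subset:
  assumes "closedin mtopology B" "mbounded (A \<union> B)" "B \<noteq> {}" "hausd d A B = 0"
  shows "A \<subseteq> B"
proof
  fix x assume "x \<in> A"
  show "x \<in> B"
  proof (rule ccontr)
    assume "x \<notin> B"
    moreover have "x \<in> M" using assms(2) \<open>x \<in> A\<close> mbounded_subset_mspace by blast
    ultimately obtain r where "r > 0" "disjnt B (mball x r)"
      using assms(1) unfolding closedin_metric by blast
    moreover obtain y where "y \<in> B" "d x y < r"
      using hausd_less_imp[OF assms(2,3)] assms(4) \<open>r > 0\<close> \<open>x \<in> A\<close> by force
    moreover have "y \<in> M" using \<open>y \<in> B\<close> assms(2) mbounded_subset_mspace by blast
    ultimately show False using \<open>x \<in> M\<close> by (auto simp: disjnt_iff)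
  qed
qed

lemma hausd_insert_le:
  assumes "x \<in> M" "y \<in> M" "F \<subseteq> M"
  shows "hausd d (insert x F) (insert y F) \<le> d x y"
proof (rule hausd_le)
  fix a assume "a \<in> insert x F"
  then show "\<exists>b\<in>insert y F. d a b \<le> d x y"
    using assms(3) by (metis insertCI insertE nonneg order_refl subsetD zero)
next
  fix b assume "b \<in> insert y F"
  then show "\<exists>a\<in>insert x F. d a b \<le> d x y"
    using assms(3) by (metis insertCI insertE nonneg order_refl subsetD zero)
qed auto

lemma hyp_carrier_finite:
  assumes "finite F" "F \<subseteq> M" "F \<noteq> {}"
  shows "F \<in> hyp_carrier M d"
proof -
  have "closedin mtopology F"
    using t1_space_mtopology assms(1,2) unfolding t1_space_closedin_finite by simp
  with assms show ?thesis unfolding hyp_carrier_def by simp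
qed

lemma Metric_space_hyp:
  assumes "mbounded M"
  shows "Metric_space (hyp_carrier M d) (restrict_dist (hyp_carrier M d) (hausd d))"
proof (rule Metric_space_restrict_dist)
  have bdd: "mbounded S" if "S \<subseteq> M" for S using assms that by (rule mbounded_subset)
  fix A B C assume H: "A \<in> hyp_carrier M d" "B \<in> hyp_carrier M d" "C \<in> hyp_carrier M d"
  then have A: "A \<subseteq> M" "A \<noteq> {}" "closedin mtopology A"
    and B: "B \<subseteq> M" "B \<noteq> {}" "closedin mtopology B"
    and C: "C \<subseteq> M" "C \<noteq> {}" by (auto simp: hyp_carrier_def)
  show "0 \<le> hausd d A B" using A B bdd by (intro hausd_nonneg) auto
  show "hausd d A B = hausd d B A" by (rule hausd_commute)
  show "hausd d A B = 0 \<longleftrightarrow> A = B"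
    using hausd_eq_0_imp_subset[of B A] hausd_eq_0_imp_subset[of A B] hausd_self[OF bdd[OF A(1)] A(2)]
      A B bdd[of "A \<union> B"] by (auto simp: hausd_commute Un_commute)
  show "hausd d A C \<le> hausd d A B + hausd d B C"
    using A B C bdd by (intro hausd_triangle) auto
qed

lemma hausd_singletons: "hausd d {x} {y} = d x y"
  by (simp add: hausd_def commute)

lemma mdist_le_diam_of: "mbounded M \<Longrightarrow> x \<in> M \<Longrightarrow> y \<in> M \<Longrightarrow> d x y \<le> diam_of M d"
  unfolding mbounded_alt by (metis diam_of_upper)

lemma hausd_le_diam_of:
  assumes "mbounded M" "A \<in> hyp_carrier M d" "B \<in> hyp_carrier M d"
  shows "hausd d A B \<le> diam_of M d"
proof -
  have A: "A \<subseteq> M" "A \<noteq> {}" and B: "B \<subseteq> M" "B \<noteq> {}"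
    using assms(2,3) by (auto simp: hyp_carrier_def)
  then have "d a b \<le> diam_of M d" if "a \<in> A" "b \<in> B" for a b
    using that mdist_le_diam_of[OF assms(1)] by blast
  then show ?thesis using A(2) B(2) by (intro hausd_le) auto
qed

lemma diam_of_hyp:
  assumes "mbounded M" "M \<noteq> {}"
  shows "diam_of (hyp_carrier M d) (hausd d) = diam_of M d"
proof (rule antisym)
  have singleton: "\<And>x. x \<in> M \<Longrightarrow> {x} \<in> hyp_carrier M d" by (simp add: hyp_carrier_finite)
  then show "diam_of (hyp_carrier M d) (hausd d) \<le> diam_of M d"
    using assms(2) hausd_le_diam_of[OF assms(1)] by (intro diam_of_least) auto
  show "diam_of M d \<le> diam_of (hyp_carrier M d) (hausd d)"
  proof (rule diam_of_least[OF assms(2)])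
    fix x y assume "x \<in> M" "y \<in> M"
    then show "d x y \<le> diam_of (hyp_carrier M d) (hausd d)"
      using diam_of_upper[of "hyp_carrier M d" "hausd d", OF hausd_le_diam_of[OF assms(1)]] singleton
      by (metis hausd_singletons)
  qed
qed

lemma is_singleton_hyp_carrier: "is_singleton (hyp_carrier M d) \<longleftrightarrow> is_singleton M"
proof
  assume "is_singleton (hyp_carrier M d)"
  then obtain A where H: "hyp_carrier M d = {A}" by (auto elim: is_singletonE)
  then have "M \<noteq> {}" by (auto simp: hyp_carrier_def)
  moreover have "x = y" if "x \<in> M" "y \<in> M" for x y
    using hyp_carrier_finite[of "{x}"] hyp_carrier_finite[of "{y}"] that H by auto
  ultimately show "is_singleton M" by (rule is_singletonI')
next
  assume "is_singleton M"
  then obtain s where "M = {s}" by (auto elim: is_singletonE)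
  then have "hyp_carrier M d = {{s}}"
    using hyp_carrier_finite[of "{s}"] by (auto simp: hyp_carrier_def)
  then show "is_singleton (hyp_carrier M d)" by simp
qed

lemma connected_imp_well_chained:
  assumes "connected_space mtopology"
  shows "well_chained M d"
  unfolding well_chained_def
proof (intro allI impI ballI)
  fix e :: real and U x y
  assume "e > 0" and step: "\<forall>x\<in>M. \<forall>y\<in>M. d x y < e \<longrightarrow> x \<in> U \<longrightarrow> y \<in> U"
    and "x \<in> M" "y \<in> M" "x \<in> U"
  have "openin mtopology (M \<inter> U)"
    unfolding openin_mtopology using \<open>e > 0\<close> step by (intro conjI allI impI exI[of _ e]) auto
  moreover have "openin mtopology (M - U)"
    unfolding openin_mtopology
  proof (intro conjI allI impI exI[of _ e])
    fix z assume "z \<in> M - U"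
    then show "mball z e \<subseteq> M - U" using step commute by fastforce
  qed (use \<open>e > 0\<close> in auto)
  moreover have "M - (M \<inter> U) = M - U" by blast
  ultimately have "M \<inter> U = {} \<or> M \<inter> U = M"
    using assms unfolding connected_space_clopen_in closedin_def by auto
  with \<open>x \<in> M\<close> \<open>y \<in> M\<close> \<open>x \<in> U\<close> show "y \<in> U" by blast
qed

lemma hyp_carrier_finite_approx:
  assumes "compact_space mtopology" "C \<in> hyp_carrier M d" "e > 0"
  obtains F where "finite F" "F \<subseteq> C" "F \<noteq> {}" "hausd d C F < e"
proof -
  have C: "C \<subseteq> M" "C \<noteq> {}" "closedin mtopology C" using assms(2) by (auto simp: hyp_carrier_def)
  then have "mtotally_bounded C"
    using assms(1) by (intro compactin_imp_mtotally_bounded closedin_compact_space) auto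
  then obtain F where F: "finite F" "F \<subseteq> C" "C \<subseteq> (\<Union>x\<in>F. mball x (e/2))"
    unfolding mtotally_bounded_def using assms(3) by (meson half_gt_zero)
  then have "F \<noteq> {}" using C(2) by auto
  have "hausd d C F \<le> e/2"
  proof (rule hausd_le[OF C(2) \<open>F \<noteq> {}\<close>])
    fix a assume "a \<in> C"
    then obtain b where "b \<in> F" "d b a < e/2" using F(3) by auto
    then show "\<exists>b\<in>F. d a b \<le> e/2" using commute by (metis less_eq_real_def)
  next
    fix b assume "b \<in> F"
    then show "\<exists>a\<in>C. d a b \<le> e/2" using F(2) C(1) assms(3) by (intro bexI[of _ b]) auto
  qed
  with assms(3) F \<open>F \<noteq> {}\<close> show ?thesis using that by simp
qed

lemma hyp_insert_step:
  assumes "well_chained M d" "e > 0"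
    and step: "\<And>C D. C \<in> hyp_carrier M d \<Longrightarrow> D \<in> hyp_carrier M d \<Longrightarrow> hausd d C D < e \<Longrightarrow>
      C \<in> U \<Longrightarrow> D \<in> U"
    and F: "finite F" "F \<subseteq> M" "F \<noteq> {}" and "x \<in> M"
  shows "insert x F \<in> U \<longleftrightarrow> F \<in> U"
proof -
  obtain f where "f \<in> F" using F(3) by blast
  let ?W = "{z. insert z F \<in> U}"
  have W_step: "v \<in> ?W" if "u \<in> M" "v \<in> M" "d u v < e" "u \<in> ?W" for u v
  proof -
    have "insert u F \<in> hyp_carrier M d" "insert v F \<in> hyp_carrier M d"
      using that(1,2) F by (simp_all add: hyp_carrier_finite)
    moreover have "hausd d (insert u F) (insert v F) < e"
      using hausd_insert_le[OF that(1,2) F(2)] that(3) by linarith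
    ultimately show ?thesis using step that(4) by blast
  qed
  have "x \<in> ?W \<longleftrightarrow> f \<in> ?W"
  proof
    show "f \<in> ?W" if "x \<in> ?W"
      by (rule well_chainedD[OF assms(1,2), where x=x]) (use W_step that \<open>x \<in> M\<close> \<open>f \<in> F\<close> F(2) in auto)
    show "x \<in> ?W" if "f \<in> ?W"
      by (rule well_chainedD[OF assms(1,2), where x=f]) (use W_step that \<open>x \<in> M\<close> \<open>f \<in> F\<close> F(2) in auto)
  qed
  moreover have "insert f F = F" using \<open>f \<in> F\<close> by blast
  ultimately show ?thesis by simp
qed

lemma well_chained_hyp:
  assumes "compact_space mtopology" "well_chained M d"
  shows "well_chained (hyp_carrier M d) (hausd d)"
  unfolding well_chained_def
proof (intro allI impI ballI)
  let ?H = "hyp_carrier M d"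
  fix e :: real and U A B
  assume "e > 0" and step: "\<forall>C\<in>?H. \<forall>D\<in>?H. hausd d C D < e \<longrightarrow> C \<in> U \<longrightarrow> D \<in> U"
    and A: "A \<in> ?H" and B: "B \<in> ?H" and "A \<in> U"
  note insert_iff = hyp_insert_step[OF assms(2) \<open>e > 0\<close>, of U]
  obtain x0 where "x0 \<in> A" using A by (auto simp: hyp_carrier_def)
  then have "x0 \<in> M" using A by (auto simp: hyp_carrier_def)
  have finite_iff: "F \<in> U \<longleftrightarrow> {x0} \<in> U" if "finite F" "F \<noteq> {}" "F \<subseteq> M" for F
    using that
  proof (induction F rule: finite_ne_induct)
    case (singleton x)
    then show ?case using insert_iff[of "{x0}" x] insert_iff[of "{x}" x0] step \<open>x0 \<in> M\<close>
      by (simp add: insert_commute)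
  next
    case (insert x F)
    then show ?case using insert_iff[of F x] step by simp
  qed
  have "C \<in> U \<longleftrightarrow> {x0} \<in> U" if C: "C \<in> ?H" for C
  proof -
    obtain F where F: "finite F" "F \<subseteq> C" "F \<noteq> {}" "hausd d C F < e"
      using hyp_carrier_finite_approx[OF assms(1) C \<open>e > 0\<close>] .
    have "F \<subseteq> M" using F(2) C by (auto simp: hyp_carrier_def)
    moreover have "hausd d F C < e" using F(4) hausd_commute by simp
    ultimately show ?thesis
      using step C hyp_carrier_finite finite_iff F(1,3,4) by blast
  qed
  then show "B \<in> U" using A B \<open>A \<in> U\<close> by blast
qed

end

lemma continuumD:
  assumes "continuum X d"
  shows "Metric_space X d" "X \<noteq> {}" "Metric_space.mbounded X d X"
    "compact_space (Metric_space.mtopology X d)" "well_chained X d"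
proof -
  show M: "Metric_space X d" and "X \<noteq> {}" and compact: "compact_space (Metric_space.mtopology X d)"
    using assms by (auto simp: continuum_def)
  interpret Metric_space X d by (rule M)
  show "mbounded X" using compact compactin_imp_mbounded by (simp add: compact_space_def)
  show "well_chained X d" using assms connected_imp_well_chained by (simp add: continuum_def)
qed

lemma GH_dist_eqI:
  fixes X :: "'a set" and Y :: "'b set"
  assumes realize: "\<And>r. c < r \<Longrightarrow> \<exists>(Z :: ('a + 'b) set) dZ f g. Metric_space Z dZ \<and>
      isom_embed X dX Z dZ f \<and> isom_embed Y dY Z dZ g \<and> hausd dZ (f ` X) (g ` Y) \<le> r"
    and lower: "\<And>(Z :: ('a + 'b) set) dZ f g r. Metric_space Z dZ \<Longrightarrow> isom_embed X dX Z dZ f \<Longrightarrow>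
      isom_embed Y dY Z dZ g \<Longrightarrow> hausd dZ (f ` X) (g ` Y) < r \<Longrightarrow> c \<le> r"
  shows "GH_dist X dX Y dY = c"
proof -
  define R where "R = {r. \<exists>(Z :: ('a + 'b) set) dZ f g. Metric_space Z dZ \<and>
      isom_embed X dX Z dZ f \<and> isom_embed Y dY Z dZ g \<and> hausd dZ (f ` X) (g ` Y) \<le> r}"
  have R_lower: "c \<le> r" if "r \<in> R" for r
  proof (rule field_le_epsilon)
    fix e :: real assume "e > 0"
    with that show "c \<le> r + e" unfolding R_def using lower by force
  qed
  have R_upper: "c + e \<in> R" if "e > 0" for e
    using realize[of "c + e"] that unfolding R_def by simp
  show ?thesis
    unfolding GH_dist_def R_def[symmetric]
  proof (rule antisym)
    show "c \<le> Inf R" using R_upper[of 1] R_lower by (intro cInf_greatest) auto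
    show "Inf R \<le> c"
    proof (rule field_le_epsilon)
      fix e :: real assume "e > 0"
      then show "Inf R \<le> c + e" using R_upper R_lower by (intro cInf_lower bdd_belowI) auto
    qed
  qed
qed

fun glue_dist :: "('a \<Rightarrow> 'a \<Rightarrow> real) \<Rightarrow> ('b \<Rightarrow> 'b \<Rightarrow> real) \<Rightarrow> real \<Rightarrow> 'a + 'b \<Rightarrow> 'a + 'b \<Rightarrow> real"
where
  "glue_dist dX dY r (Inl x) (Inl x') = dX x x'"
| "glue_dist dX dY r (Inr y) (Inr y') = dY y y'"
| "glue_dist dX dY r (Inl x) (Inr y) = r"
| "glue_dist dX dY r (Inr y) (Inl x) = r"

lemma Metric_space_glue_dist:
  assumes X: "Metric_space X dX" and Y: "Metric_space Y dY" and "r > 0"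
    and "\<And>x x'. x \<in> X \<Longrightarrow> x' \<in> X \<Longrightarrow> dX x x' \<le> 2 * r"
    and "\<And>y y'. y \<in> Y \<Longrightarrow> y' \<in> Y \<Longrightarrow> dY y y' \<le> 2 * r"
  shows "Metric_space (Inl ` X \<union> Inr ` Y) (glue_dist dX dY r)"
proof
  fix u v w
  show "0 \<le> glue_dist dX dY r u v"
    using \<open>r > 0\<close> Metric_space.nonneg[OF X] Metric_space.nonneg[OF Y] by (cases u; cases v) auto
  show "glue_dist dX dY r u v = glue_dist dX dY r v u"
    using Metric_space.commute[OF X] Metric_space.commute[OF Y] by (cases u; cases v) auto
  assume "u \<in> Inl ` X \<union> Inr ` Y" "v \<in> Inl ` X \<union> Inr ` Y"
  then show "glue_dist dX dY r u v = 0 \<longleftrightarrow> u = v"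
    using \<open>r > 0\<close> Metric_space.zero[OF X] Metric_space.zero[OF Y] by (cases u; cases v) auto
  assume "w \<in> Inl ` X \<union> Inr ` Y"
  then show "glue_dist dX dY r u w \<le> glue_dist dX dY r u v + glue_dist dX dY r v w"
    using \<open>u \<in> _\<close> \<open>v \<in> _\<close> assms Metric_space.triangle[OF X] Metric_space.triangle[OF Y]
      Metric_space.nonneg[OF X] Metric_space.nonneg[OF Y]
    by (cases u; cases v; cases w) force+
qed

lemma GH_glue_realizes:
  fixes X :: "'a set" and Y :: "'b set"
  assumes X: "Metric_space X dX" "X \<noteq> {}" and Y: "Metric_space Y dY" "Y \<noteq> {}" and "r > 0"
    and "\<And>x x'. x \<in> X \<Longrightarrow> x' \<in> X \<Longrightarrow> dX x x' \<le> 2 * r"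
    and "\<And>y y'. y \<in> Y \<Longrightarrow> y' \<in> Y \<Longrightarrow> dY y y' \<le> 2 * r"
  shows "\<exists>(Z :: ('a + 'b) set) dZ f g. Metric_space Z dZ \<and>
      isom_embed X dX Z dZ f \<and> isom_embed Y dY Z dZ g \<and> hausd dZ (f ` X) (g ` Y) \<le> r"
proof (intro exI conjI)
  let ?Z = "Inl ` X \<union> Inr ` Y" and ?dZ = "glue_dist dX dY r"
  show Z: "Metric_space ?Z ?dZ" using assms by (intro Metric_space_glue_dist)
  show "isom_embed X dX ?Z ?dZ Inl" "isom_embed Y dY ?Z ?dZ Inr" by (auto simp: isom_embed_def)
  show "hausd ?dZ (Inl ` X) (Inr ` Y) \<le> r"
    using X(2) Y(2) by (intro Metric_space.hausd_le[OF Z]) auto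
qed

lemma (in Metric_space) mbounded_isom_image:
  assumes "isom_embed X dX M d f" "\<And>x x'. x \<in> X \<Longrightarrow> x' \<in> X \<Longrightarrow> dX x x' \<le> K"
  shows "mbounded (f ` X)"
proof -
  have "f ` X \<subseteq> M" using assms(1) by (simp add: isom_embed_def)
  moreover have "\<forall>u\<in>f ` X. \<forall>v\<in>f ` X. d u v \<le> K" using assms by (auto simp: isom_embed_def)
  ultimately show ?thesis unfolding mbounded_alt by blast
qed

lemma isom_embed_dist_le:
  assumes Z: "Metric_space Z dZ" and f: "isom_embed X dX Z dZ f" and g: "isom_embed Y dY Z dZ g"
    and "x \<in> X" "x' \<in> X" "y \<in> Y" "y' \<in> Y"
  shows "dX x x' \<le> dZ (f x) (g y) + dY y y' + dZ (f x') (g y')"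
proof -
  interpret Metric_space Z dZ by (rule Z)
  have in_Z: "f x \<in> Z" "f x' \<in> Z" "g y \<in> Z" "g y' \<in> Z"
    using f g assms(4-7) by (auto simp: isom_embed_def)
  have "dZ (f x) (f x') \<le> dZ (f x) (g y) + dZ (g y) (g y') + dZ (g y') (f x')"
    using triangle[OF in_Z(1,3,2)] triangle[OF in_Z(3,4,2)] by linarith
  then show ?thesis using f g assms(4-7) by (simp add: isom_embed_def commute)
qed

lemma isom_embed_hausd_less:
  assumes Z: "Metric_space Z dZ" and f: "isom_embed X dX Z dZ f" and g: "isom_embed Y dY Z dZ g"
    and "X \<noteq> {}" "Y \<noteq> {}"
    and "\<And>x x'. x \<in> X \<Longrightarrow> x' \<in> X \<Longrightarrow> dX x x' \<le> K"
    and "\<And>y y'. y \<in> Y \<Longrightarrow> y' \<in> Y \<Longrightarrow> dY y y' \<le> K"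
    and "hausd dZ (f ` X) (g ` Y) < r"
  shows "\<And>x. x \<in> X \<Longrightarrow> \<exists>y\<in>Y. dZ (f x) (g y) < r"
    and "\<And>y. y \<in> Y \<Longrightarrow> \<exists>x\<in>X. dZ (f x) (g y) < r"
proof -
  interpret Metric_space Z dZ by (rule Z)
  have "mbounded (f ` X \<union> g ` Y)"
    using mbounded_isom_image[OF f assms(6)] mbounded_isom_image[OF g assms(7)] by (simp add: mbounded_Un)
  moreover have "f ` X \<noteq> {}" "g ` Y \<noteq> {}" using assms(4,5) by auto
  ultimately show "\<And>x. x \<in> X \<Longrightarrow> \<exists>y\<in>Y. dZ (f x) (g y) < r"
    and "\<And>y. y \<in> Y \<Longrightarrow> \<exists>x\<in>X. dZ (f x) (g y) < r"
    using hausd_less_imp[of "f ` X" "g ` Y"] hausd_less_imp'[of "f ` X" "g ` Y"] assms(8) by blast+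
qed

lemma GH_dist_singleton:
  fixes s :: 'a and Y :: "'b set"
  assumes S: "Metric_space {s} dS" and Y: "Metric_space Y dY" "Y \<noteq> {}"
    and bounded: "\<And>y y'. y \<in> Y \<Longrightarrow> y' \<in> Y \<Longrightarrow> dY y y' \<le> K"
  shows "GH_dist {s} dS Y dY = diam_of Y dY / 2"
proof -
  have "dS s s = 0" using Metric_space.zero[OF S] by blast
  have diam: "dY y y' \<le> diam_of Y dY" if "y \<in> Y" "y' \<in> Y" for y y'
    using bounded that by (rule diam_of_upper)
  show ?thesis
  proof (rule GH_dist_eqI)
    fix r assume r: "diam_of Y dY / 2 < r"
    obtain y0 where "y0 \<in> Y" using Y(2) by blast
    then have "0 \<le> diam_of Y dY" using diam[of y0 y0] Metric_space.zero[OF Y(1), of y0 y0] by simp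
    show "\<exists>(Z :: ('a + 'b) set) dZ f g. Metric_space Z dZ \<and> isom_embed {s} dS Z dZ f \<and>
        isom_embed Y dY Z dZ g \<and> hausd dZ (f ` {s}) (g ` Y) \<le> r"
    proof (rule GH_glue_realizes[OF S _ Y])
      show "0 < r" using r \<open>0 \<le> diam_of Y dY\<close> by linarith
      then show "\<And>x x'. x \<in> {s} \<Longrightarrow> x' \<in> {s} \<Longrightarrow> dS x x' \<le> 2 * r" using \<open>dS s s = 0\<close> by simp
      show "\<And>y y'. y \<in> Y \<Longrightarrow> y' \<in> Y \<Longrightarrow> dY y y' \<le> 2 * r" using diam r by fastforce
    qed simp
  next
    fix Z :: "('a + 'b) set" and dZ f g r
    assume Z: "Metric_space Z dZ" and f: "isom_embed {s} dS Z dZ f" and g: "isom_embed Y dY Z dZ g"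
      and "hausd dZ (f ` {s}) (g ` Y) < r"
    have S_bounded: "\<And>x x'. x \<in> {s} \<Longrightarrow> x' \<in> {s} \<Longrightarrow> dS x x' \<le> max 0 K"
      using \<open>dS s s = 0\<close> by simp
    have Y_bounded: "\<And>y y'. y \<in> Y \<Longrightarrow> y' \<in> Y \<Longrightarrow> dY y y' \<le> max 0 K"
      using bounded by (meson max.coboundedI2)
    have near: "dZ (f s) (g y) < r" if "y \<in> Y" for y
      using isom_embed_hausd_less(2)[OF Z f g _ Y(2) S_bounded Y_bounded \<open>hausd _ _ _ < r\<close> that] by blast
    have "dY y y' \<le> 2 * r" if "y \<in> Y" "y' \<in> Y" for y y'
    proof -
      have "dY y y' \<le> dZ (g y) (f s) + dS s s + dZ (g y') (f s)"
        using isom_embed_dist_le[OF Z g f that singletonI singletonI] .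
      then show ?thesis
        using near[OF that(1)] near[OF that(2)] \<open>dS s s = 0\<close> Metric_space.commute[OF Z] by simp
    qed
    then show "diam_of Y dY / 2 \<le> r" using diam_of_least[OF Y(2), of dY "2 * r"] by simp
  qed
qed

lemma isom_embed_uniform_hausd_ge:
  assumes Z: "Metric_space Z dZ" and f: "isom_embed S dS Z dZ f" and g: "isom_embed Y dY Z dZ g"
    and S: "Metric_space S dS" and a12: "a1 \<in> S" "a2 \<in> S" "a1 \<noteq> a2"
    and uniform: "\<And>a b. a \<in> S \<Longrightarrow> b \<in> S \<Longrightarrow> a \<noteq> b \<Longrightarrow> dS a b = t"
    and Y: "Metric_space Y dY" "Y \<noteq> {}" "\<And>y y'. y \<in> Y \<Longrightarrow> y' \<in> Y \<Longrightarrow> dY y y' \<le> t"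
      "well_chained Y dY"
    and less: "hausd dZ (f ` S) (g ` Y) < r"
  shows "t / 2 \<le> r"
proof (rule ccontr)
  assume "\<not> t / 2 \<le> r"
  then have gap: "0 < t - 2 * r" by simp
  have "S \<noteq> {}" using a12(1) by blast
  have "dS a b \<le> t" if "a \<in> S" "b \<in> S" for a b
    using uniform[OF that] uniform[OF a12] Metric_space.nonneg[OF S, of a1 a2]
      Metric_space.zero[OF S that] by (cases "a = b") auto
  then have near: "\<And>a. a \<in> S \<Longrightarrow> \<exists>y\<in>Y. dZ (f a) (g y) < r" "\<And>y. y \<in> Y \<Longrightarrow> \<exists>a\<in>S. dZ (f a) (g y) < r"
    using isom_embed_hausd_less[OF Z f g \<open>S \<noteq> {}\<close> Y(2) _ Y(3) less] by blast+
  have same: "a = b" if "a \<in> S" "b \<in> S" "y \<in> Y" "y' \<in> Y" "dZ (f a) (g y) < r"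
    "dZ (f b) (g y') < r" "dY y y' < t - 2 * r" for a b y y'
  proof (rule ccontr)
    assume "a \<noteq> b"
    then show False
      using isom_embed_dist_le[OF Z f g that(1-4)] uniform[OF that(1,2)] that(5-7) by linarith
  qed
  obtain y0 where "y0 \<in> Y" using Y(2) by blast
  then obtain a0 where a0: "a0 \<in> S" "dZ (f a0) (g y0) < r" using near(2) by blast
  let ?U = "{y. dZ (f a0) (g y) < r}"
  have U_step: "y' \<in> ?U" if step: "y \<in> Y" "y' \<in> Y" "dY y y' < t - 2 * r" "y \<in> ?U" for y y'
  proof -
    obtain b where "b \<in> S" "dZ (f b) (g y') < r" using near(2)[OF step(2)] by blast
    with same[of a0 b y y'] step a0(1) show ?thesis by auto
  qed
  have in_U: "y \<in> ?U" if "y \<in> Y" for y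
    by (rule well_chainedD[OF Y(4) gap, where x=y0]) (use U_step a0 \<open>y0 \<in> Y\<close> that in auto)
  obtain b where "b \<in> S" "b \<noteq> a0" using a12 by blast
  then obtain y where "y \<in> Y" "dZ (f b) (g y) < r" using near(1) by blast
  moreover have "dY y y = 0" using Metric_space.zero[OF Y(1) \<open>y \<in> Y\<close> \<open>y \<in> Y\<close>] by simp
  ultimately have "a0 = b" using same[of a0 b y y] in_U a0(1) \<open>b \<in> S\<close> gap by simp
  with \<open>b \<noteq> a0\<close> show False by simp
qed

lemma GH_dist_uniform_well_chained:
  fixes S :: "'a set" and Y :: "'b set"
  assumes S: "Metric_space S dS" and a12: "a1 \<in> S" "a2 \<in> S" "a1 \<noteq> a2"
    and uniform: "\<And>a b. a \<in> S \<Longrightarrow> b \<in> S \<Longrightarrow> a \<noteq> b \<Longrightarrow> dS a b = t"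
    and Y: "Metric_space Y dY" "Y \<noteq> {}" "\<And>y y'. y \<in> Y \<Longrightarrow> y' \<in> Y \<Longrightarrow> dY y y' \<le> t"
      "well_chained Y dY"
  shows "GH_dist S dS Y dY = t / 2"
proof (rule GH_dist_eqI)
  fix r assume r: "t / 2 < r"
  have "0 < t" using uniform[OF a12] Metric_space.zero[OF S a12(1,2)] Metric_space.nonneg[OF S, of a1 a2] a12(3)
    by linarith
  show "\<exists>(Z :: ('a + 'b) set) dZ f g. Metric_space Z dZ \<and> isom_embed S dS Z dZ f \<and>
      isom_embed Y dY Z dZ g \<and> hausd dZ (f ` S) (g ` Y) \<le> r"
  proof (rule GH_glue_realizes[OF S _ Y(1,2)])
    show "S \<noteq> {}" "0 < r" using a12(1) r \<open>0 < t\<close> by auto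
    show "dS a b \<le> 2 * r" if "a \<in> S" "b \<in> S" for a b
      using uniform[OF that] Metric_space.zero[OF S that] r \<open>0 < t\<close> by (cases "a = b") auto
    show "\<And>y y'. y \<in> Y \<Longrightarrow> y' \<in> Y \<Longrightarrow> dY y y' \<le> 2 * r" using Y(3) r by fastforce
  qed
next
  show "t / 2 \<le> r" if "Metric_space Z dZ" "isom_embed S dS Z dZ f" "isom_embed Y dY Z dZ g"
    "hausd dZ (f ` S) (g ` Y) < r" for Z :: "('a + 'b) set" and dZ f g r
    using isom_embed_uniform_hausd_ge[OF that(1-3) S a12 uniform Y that(4)] .
qed

lemma GH_dist_uniform:
  fixes S :: "'a set" and Y :: "'b set"
  assumes S: "Metric_space S dS" "S \<noteq> {}"
    and uniform: "\<And>a b. a \<in> S \<Longrightarrow> b \<in> S \<Longrightarrow> a \<noteq> b \<Longrightarrow> dS a b = t"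
    and Y: "Metric_space Y dY" "Y \<noteq> {}" and Y_bounded: "\<And>y y'. y \<in> Y \<Longrightarrow> y' \<in> Y \<Longrightarrow> dY y y' \<le> t"
    and chained: "well_chained Y dY"
  shows "GH_dist S dS Y dY = (if is_singleton S then diam_of Y dY else t) / 2"
proof (cases "is_singleton S")
  case True
  then obtain s where "S = {s}" by (auto elim: is_singletonE)
  then have "GH_dist S dS Y dY = diam_of Y dY / 2"
    using GH_dist_singleton[OF _ Y Y_bounded] S(1) by simp
  with True show ?thesis by simp
next
  case False
  then obtain a1 a2 where "a1 \<in> S" "a2 \<in> S" "a1 \<noteq> a2"
    using S(2) is_singletonI'[of S] by blast
  then have "GH_dist S dS Y dY = t / 2"
    by (rule GH_dist_uniform_well_chained[OF S(1) _ _ _ uniform Y Y_bounded chained])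
  with False show ?thesis by simp
qed

lemma GH_dist_uniform_continuum:
  assumes S: "Metric_space S dS" "S \<noteq> {}"
    and uniform: "\<And>a b. a \<in> S \<Longrightarrow> b \<in> S \<Longrightarrow> a \<noteq> b \<Longrightarrow> dS a b = t"
    and X: "continuum X d" "diam_of X d \<le> t"
  shows "GH_dist S dS X d = (if is_singleton S then diam_of X d else t) / 2"
proof -
  interpret Metric_space X d using continuumD(1)[OF X(1)] .
  have "d x y \<le> t" if "x \<in> X" "y \<in> X" for x y
    using mdist_le_diam_of[OF continuumD(3)[OF X(1)] that] X(2) by linarith
  then show ?thesis
    using GH_dist_uniform[OF S uniform Metric_space_axioms continuumD(2)[OF X(1)] _ continuumD(5)[OF X(1)]]
    by blast
qed

lemma GH_dist_uniform_hyp_continuum: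
  assumes S: "Metric_space S dS" "S \<noteq> {}"
    and uniform: "\<And>a b. a \<in> S \<Longrightarrow> b \<in> S \<Longrightarrow> a \<noteq> b \<Longrightarrow> dS a b = t"
    and X: "continuum X d" "diam_of X d \<le> t"
  shows "GH_dist S dS (hyp_carrier X d) (hausd d) = (if is_singleton S then diam_of X d else t) / 2"
proof -
  interpret Metric_space X d using continuumD(1)[OF X(1)] .
  let ?H = "hyp_carrier X d"
  have "mbounded X" "X \<noteq> {}" using continuumD[OF X(1)] by auto
  then obtain x where "{x} \<in> ?H" using hyp_carrier_finite[of "{x}" for x] by blast
  then have "?H \<noteq> {}" by blast
  have "restrict_dist ?H (hausd d) A B \<le> t" if "A \<in> ?H" "B \<in> ?H" for A B
    using hausd_le_diam_of[OF \<open>mbounded X\<close> that] X(2) that by (simp add: restrict_dist_def)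
  moreover have "well_chained ?H (restrict_dist ?H (hausd d))"
    using well_chained_hyp continuumD[OF X(1)] by simp
  ultimately have "GH_dist S dS ?H (restrict_dist ?H (hausd d))
      = (if is_singleton S then diam_of ?H (restrict_dist ?H (hausd d)) else t) / 2"
    by (intro GH_dist_uniform[OF S uniform Metric_space_hyp[OF \<open>mbounded X\<close>] \<open>?H \<noteq> {}\<close>])
  then show ?thesis using diam_of_hyp[OF \<open>mbounded X\<close> \<open>X \<noteq> {}\<close>] by simp
qed

lemma Metric_space_simplex: "0 < t \<Longrightarrow> Metric_space S (simplex_dist t)"
  by unfold_locales (auto simp: simplex_dist_def)

lemma hausd_simplex:
  assumes "0 < t" "A \<in> hyp_carrier S (simplex_dist t)" "B \<in> hyp_carrier S (simplex_dist t)" "A \<noteq> B"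
  shows "hausd (simplex_dist t) A B = t"
proof -
  interpret Metric_space S "simplex_dist t" using assms(1) by (rule Metric_space_simplex)
  have A: "A \<subseteq> S" "A \<noteq> {}" and B: "B \<subseteq> S" "B \<noteq> {}"
    using assms(2,3) by (auto simp: hyp_carrier_def)
  have le_t: "simplex_dist t x y \<le> t" for x y using assms(1) by (simp add: simplex_dist_def)
  have "mbounded (A \<union> B)" unfolding mbounded_alt using A B le_t by blast
  have "hausd (simplex_dist t) A B \<le> t" using A(2) B(2) le_t by (intro hausd_le) auto
  moreover have "\<not> hausd (simplex_dist t) A B < t"
  proof
    assume less: "hausd (simplex_dist t) A B < t"
    have "A \<subseteq> B"
    proof
      fix x assume "x \<in> A"
      then obtain y where "y \<in> B" "simplex_dist t x y < t"
        using hausd_less_imp[OF \<open>mbounded (A \<union> B)\<close> B(2) less] by blast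
      then show "x \<in> B" by (auto simp: simplex_dist_def split: if_splits)
    qed
    moreover have "B \<subseteq> A"
    proof
      fix y assume "y \<in> B"
      then obtain x where "x \<in> A" "simplex_dist t x y < t"
        using hausd_less_imp'[OF \<open>mbounded (A \<union> B)\<close> A(2) less] by blast
      then show "y \<in> A" by (auto simp: simplex_dist_def split: if_splits)
    qed
    ultimately show False using assms(4) by blast
  qed
  ultimately show ?thesis by linarith
qed

theorem mainTheorem17:
  fixes X :: "'a set" and d :: "'a \<Rightarrow> 'a \<Rightarrow> real" and t :: real and p :: nat
  assumes "continuum X d"
    and "t \<ge> diam_of X d" and "t > 0" and "p \<ge> 1"
  shows "GH_dist (simplex_carrier p) (simplex_dist t) X d =
         GH_dist (hyp_carrier (simplex_carrier p) (simplex_dist t)) (hyp_dist (simplex_dist t))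
                 (hyp_carrier X d) (hyp_dist d)"
proof -
  let ?S = "simplex_carrier p" and ?HS = "hyp_carrier (simplex_carrier p) (simplex_dist t)"
  interpret S: Metric_space ?S "simplex_dist t" using assms(3) by (rule Metric_space_simplex)
  have "?S \<noteq> {}" using assms(4) by (auto simp: simplex_carrier_def)
  then have "?HS \<noteq> {}" using S.hyp_carrier_finite[of "{x}" for x] by blast
  have "S.mbounded ?S"
    unfolding S.mbounded_alt using assms(3) by (intro conjI exI[of _ t]) (auto simp: simplex_dist_def)
  have uniform_HS: "restrict_dist ?HS (hausd (simplex_dist t)) A B = t"
    if "A \<in> ?HS" "B \<in> ?HS" "A \<noteq> B" for A B
    using hausd_simplex[OF assms(3) that] that(1,2) by (simp add: restrict_dist_def)
  have "GH_dist ?S (simplex_dist t) X d = (if is_singleton ?S then diam_of X d else t) / 2"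
    by (rule GH_dist_uniform_continuum[OF S.Metric_space_axioms \<open>?S \<noteq> {}\<close> _ assms(1,2)])
      (simp add: simplex_dist_def)
  moreover have "GH_dist ?HS (restrict_dist ?HS (hausd (simplex_dist t))) (hyp_carrier X d) (hausd d)
      = (if is_singleton ?HS then diam_of X d else t) / 2"
    by (rule GH_dist_uniform_hyp_continuum[OF S.Metric_space_hyp[OF \<open>S.mbounded ?S\<close>] \<open>?HS \<noteq> {}\<close>
          uniform_HS assms(1,2)])
  ultimately show ?thesis by (simp add: hyp_dist_def S.is_singleton_hyp_carrier)
qed

end
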